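(* Let $k\colon\mathbb{R}\setminus\{0\}\to[0,\infty)$ satisfy: (a) $k$ is $C^2$ on $\mathbb{R}\setminus\{0\}$ and $(1+t^2)^m k^{(n)}(t)$ is bounded for all $m,n\in\{0,1,2\}$; (b) $k$ is increasing on $(-\infty,0)$ and decreasing on $(0,\infty)$; (c) $k$ is strictly positive on $\mathbb{R}\setminus\{0\}$. Put $\tilde{k}(t)=\mathrm{sign}(t)k(t)$, $H_k(z)=z+z\int_{\mathbb{R}}\frac{\tilde{k}(t)}{z-t}\,\mathrm{d}t$ for $z\in\mathbb{C}^+$, and $F_k(x+\mathrm{i}y)=\int_{\mathbb{R}}\frac{|t|k(t)}{(x-t)^2+y^2}\,\mathrm{d}t$ for $x\in\mathbb{R}$, $y>0$. Then: (i) for every $x\in\mathbb{R}$ there is a unique $v_k(x)\in(0,\infty)$ such that $F_k(x+\mathrm{i}v_k(x))=1$; (ii) $\{z\in\mathbb{C}^+: H_k(z)\in\mathbb{R}\}=\{x+\mathrm{i}v_k(x): x\in\mathbb{R}\}$; (iii) $\{z\in\mathbb{C}^+: H_k(z)\in\mathbb{C}^+\}=\{x+\mathrm{i}y: x\in\mathbb{R},\ y>v_k(x)\}$; (iv) the function $v_k\colon\mathbb{R}\to(0,\infty)$ is (real) analytic on $\mathbb{R}$; (v) $\lim_{|x|\to\infty}v_k(x)=0$.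
   Context: $\mathbb{C}^+$ denotes the open upper half plane. *)

theory Defs
  imports "HOL-Analysis.Analysis"
begin

definition Hk :: "(real \<Rightarrow> real) \<Rightarrow> complex \<Rightarrow> complex" where
  "Hk k z = z + z * (LINT t|lborel. complex_of_real (sgn t * k t) / (z - complex_of_real t))"

definition Fk :: "(real \<Rightarrow> real) \<Rightarrow> real \<Rightarrow> real \<Rightarrow> real" where
  "Fk k x y = (LINT t|lborel. \<bar>t\<bar> * k t / ((x - t)^2 + y^2))"

definition vk :: "(real \<Rightarrow> real) \<Rightarrow> real \<Rightarrow> real" where
  "vk k x = (THE y. 0 < y \<and> Fk k x y = 1)"

definition real_analytic_on :: "(real \<Rightarrow> real) \<Rightarrow> real set \<Rightarrow> bool" where
  "real_analytic_on f S \<longleftrightarrow> (\<forall>x0\<in>S. \<exists>r>0. \<exists>a::nat \<Rightarrow> real.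
      \<forall>x. \<bar>x - x0\<bar> < r \<longrightarrow> (\<lambda>n. a n * (x - x0) ^ n) sums f x)"

end

theory Submission
  imports Defs "HOL-Probability.Sinc_Integral" "HOL-Complex_Analysis.Complex_Analysis"
begin

text \<open>Write \<open>z = x + \<i> y\<close>. Since \<open>t \<cdot> sgn t = |t|\<close>, the imaginary part of \<open>H\<^sub>k\<close> is
  \<open>Im H\<^sub>k(z) = y (1 - F\<^sub>k(x, y))\<close>. For fixed \<open>x\<close>, \<open>F\<^sub>k(x, \<cdot>)\<close> is continuous and strictly
  decreasing, is at most \<open>\<integral>|t| k(t) dt / y\<^sup>2\<close>, and exceeds \<open>1\<close> for small \<open>y\<close> because the
  monotonicity of \<open>k\<close> bounds it below by a multiple of \<open>-ln y\<close>. This gives (i), and (ii) and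
  (iii) are read off from the formula for \<open>Im H\<^sub>k\<close>. For fixed \<open>y\<close>, Peetre's inequality gives
  \<open>F\<^sub>k(x, y) = O(1 / (1 + |x|))\<close>, hence (v).

  For (iv): \<open>H\<^sub>k\<close> is holomorphic in the upper half-plane, and on the curve
  \<open>\<partial>\<^sub>y Im H\<^sub>k = Re H\<^sub>k' > 0\<close>, because \<open>Im H\<^sub>k(x + \<i> y)\<close> grows at least linearly as \<open>y\<close> crosses
  \<open>v\<^sub>k(x)\<close>. So \<open>H\<^sub>k\<close> is locally invertible there and the curve \<open>{H\<^sub>k \<in> \<real>}\<close> is an analytic
  graph over the real axis.\<close>

section \<open>Real-analytic level curves of holomorphic functions\<close>

lemma has_real_derivative_ge_if_above_line:
  fixes f :: "real \<Rightarrow> real"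
  assumes D: "(f has_real_derivative D) (at a)" and "\<delta> > 0"
    and above: "\<And>y. a < y \<Longrightarrow> y < a + \<delta> \<Longrightarrow> f a + c * (y - a) \<le> f y"
  shows "c \<le> D"
proof (rule tendsto_lowerbound)
  show "((\<lambda>y. (f y - f a) / (y - a)) \<longlongrightarrow> D) (at_right a)"
    using D unfolding has_field_derivative_iff by (rule tendsto_mono[OF at_le, rotated]) simp
  have a: "a < a + \<delta>" using \<open>\<delta> > 0\<close> by simp
  show "\<forall>\<^sub>F y in at_right a. c \<le> (f y - f a) / (y - a)"
    unfolding eventually_at_right[OF a] using a
    by (intro exI[of _ "a + \<delta>"]) (auto simp: field_simps dest: above)
qed simp

lemma has_real_derivative_Im_vertical:
  assumes "(H has_field_derivative D) (at (Complex x y))"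
  shows "((\<lambda>s. Im (H (Complex x s))) has_real_derivative Re D) (at y)"
proof -
  have line: "Complex x s = of_real x + \<i> * of_real s" for s by (simp add: complex_eq_iff)
  have "((\<lambda>s. of_real x + \<i> * of_real s) has_vector_derivative \<i>) (at y)"
    by (rule has_vector_derivative_real_field) (auto intro!: derivative_eq_intros)
  from field_vector_diff_chain_at[OF this, of H D] assms
  have "((\<lambda>s. H (Complex x s)) has_vector_derivative \<i> * D) (at y)"
    by (simp add: o_def line)
  then have "((\<lambda>s. H (Complex x s)) has_derivative (\<lambda>h. h *\<^sub>R (\<i> * D))) (at y)"
    by (simp add: has_vector_derivative_def)
  from has_derivative_Im[OF this]
  have "((\<lambda>s. Im (H (Complex x s))) has_derivative (\<lambda>h. h * Re D)) (at y)" by simp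
  moreover have "(\<lambda>h. h * Re D) = (*) (Re D)" by (auto simp: fun_eq_iff)
  ultimately show ?thesis by (simp add: has_field_derivative_def)
qed

lemma real_analytic_at_locally_Re_holomorphic:
  fixes \<phi> :: "complex \<Rightarrow> complex" and f :: "real \<Rightarrow> real"
  assumes hol: "\<phi> holomorphic_on S" and "open S" and "\<epsilon> > 0"
    and f: "\<And>x. \<bar>x - x0\<bar> < \<epsilon> \<Longrightarrow> of_real x \<in> S \<and> f x = Re (\<phi> (of_real x))"
  shows "real_analytic_on f {x0}"
proof -
  obtain \<rho> where \<rho>: "\<rho> > 0" "ball (of_real x0) \<rho> \<subseteq> S"
    using f[of x0] \<open>\<epsilon> > 0\<close> \<open>open S\<close> open_contains_ball by force
  have hol_ball: "\<phi> holomorphic_on ball (of_real x0) \<rho>"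
    using hol \<rho>(2) holomorphic_on_subset by blast
  define c where "c n = (deriv ^^ n) \<phi> (of_real x0) / fact n" for n
  have "(\<lambda>n. Re (c n) * (x - x0) ^ n) sums f x" if x: "\<bar>x - x0\<bar> < min \<rho> \<epsilon>" for x
  proof -
    have "(of_real x :: complex) \<in> ball (of_real x0) \<rho>"
      using x by (simp add: dist_of_real dist_real_def abs_minus_commute)
    then have "(\<lambda>n. c n * (of_real x - of_real x0) ^ n) sums \<phi> (of_real x)"
      unfolding c_def by (rule holomorphic_power_series[OF hol_ball])
    from sums_Re[OF this] show ?thesis
      using f[of x] x by (simp flip: of_real_diff of_real_power)
  qed
  then show ?thesis
    unfolding real_analytic_on_def using \<rho>(1) \<open>\<epsilon> > 0\<close>
    by (intro ballI exI[of _ "min \<rho> \<epsilon>"] conjI exI[of _ "\<lambda>n. Re (c n)"]) auto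
qed

definition Re_extension :: "(complex \<Rightarrow> complex) \<Rightarrow> complex \<Rightarrow> complex" where
  "Re_extension G w = (G w + cnj (G (cnj w))) / 2"

lemma Re_extension_cnj: "Re_extension G (cnj w) = cnj (Re_extension G w)"
  unfolding Re_extension_def by simp

lemma Re_extension_of_real [simp]: "Re_extension G (of_real s) = of_real (Re (G (of_real s)))"
  unfolding Re_extension_def by (simp add: complex_add_cnj)

lemma open_image_cnj:
  assumes "open V" shows "open (cnj ` V)"
  unfolding image_cnj_conv_vimage_cnj
  by (rule continuous_open_vimage[OF assms]) (intro continuous_intros)

lemma holomorphic_on_Re_extension:
  assumes hol: "G holomorphic_on V" and "open V"
  shows "Re_extension G holomorphic_on V \<inter> cnj ` V"
proof -
  have "open (V \<inter> cnj ` V)" using \<open>open V\<close> open_image_cnj by blast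
  moreover have "G holomorphic_on cnj ` (V \<inter> cnj ` V)"
    using hol by (rule holomorphic_on_subset) (auto simp: in_image_cnj_iff)
  ultimately have "(cnj \<circ> G \<circ> cnj) holomorphic_on V \<inter> cnj ` V"
    by (rule holomorphic_on_compose_cnj_cnj[rotated])
  then show ?thesis
    using hol unfolding Re_extension_def[abs_def] o_def
    by (intro holomorphic_intros) (auto intro: holomorphic_on_subset)
qed

lemma deriv_Re_extension_of_real:
  assumes "G holomorphic_on V" "open V" "of_real s \<in> V"
  shows "deriv (Re_extension G) (of_real s) = of_real (Re (deriv G (of_real s)))"
proof -
  have DG: "(G has_field_derivative deriv G (of_real s)) (at (of_real s))"
    using assms holomorphic_derivI by blast
  have "((cnj \<circ> G \<circ> cnj) has_field_derivative cnj (deriv G (of_real s))) (at (of_real s))"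
    using DG by (intro has_field_derivative_cnj_cnj) simp
  then have "(Re_extension G has_field_derivative (deriv G (of_real s) + cnj (deriv G (of_real s))) / 2)
      (at (of_real s))"
    using DG unfolding Re_extension_def[abs_def] o_def by (auto intro!: derivative_eq_intros)
  then show ?thesis by (simp add: DERIV_imp_deriv complex_add_cnj)
qed

lemma holomorphic_local_inverse_real_on_real:
  fixes p :: "complex \<Rightarrow> complex"
  assumes hol: "p holomorphic_on W" and "open W" and u0: "of_real u0 \<in> W"
    and symm: "\<And>w. w \<in> W \<Longrightarrow> cnj w \<in> W \<and> p (cnj w) = cnj (p w)"
    and "deriv p (of_real u0) \<noteq> 0"
  obtains Q q \<epsilon> where "open Q" "q holomorphic_on Q" "q ` Q \<subseteq> W" "\<epsilon> > 0"
    "\<And>x. dist (of_real x) (p (of_real u0)) < \<epsilon> \<Longrightarrow>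
       of_real x \<in> Q \<and> q (of_real x) \<in> \<real> \<and> p (q (of_real x)) = of_real x"
proof -
  obtain r where r: "r > 0" "ball (of_real u0) r \<subseteq> W" "inj_on p (ball (of_real u0) r)"
    using has_complex_derivative_locally_injective[OF hol u0 \<open>open W\<close>] assms(5) by blast
  define D where "D = ball (of_real u0 :: complex) r"
  have D: "p holomorphic_on D" "open D" "inj_on p D"
    using hol r(2,3) D_def holomorphic_on_subset by auto
  obtain q where q: "q holomorphic_on p ` D" "\<And>w. w \<in> D \<Longrightarrow> q (p w) = w"
    using holomorphic_has_inverse[OF D] by metis
  have "open (p ` D)" using open_mapping_thm3[OF D] .
  moreover have "p (of_real u0) \<in> p ` D" using r(1) D_def by simp
  ultimately obtain \<epsilon> where \<epsilon>: "\<epsilon> > 0" "ball (p (of_real u0)) \<epsilon> \<subseteq> p ` D"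
    using open_contains_ball by blast
  \<comment> \<open>\<open>p\<close> commutes with \<open>cnj\<close> and is injective on a ball centred on the real axis, so the
    unique preimage of a real point in that ball is its own conjugate.\<close>
  have real: "q y \<in> \<real>" if "y \<in> \<real>" "y \<in> p ` D" for y
  proof -
    obtain w where w: "w \<in> D" "p w = y" using \<open>y \<in> p ` D\<close> by blast
    have "dist (cnj w) (of_real u0) = dist w (of_real u0)"
      by (metis complex_cnj_complex_of_real complex_cnj_diff complex_mod_cnj dist_norm)
    then have "cnj w \<in> D" using w(1) D_def by (simp add: dist_commute)
    moreover have "p (cnj w) = p w" using symm[of w] w r(2) \<open>y \<in> \<real>\<close> D_def by (auto simp: Reals_cnj_iff)
    ultimately have "cnj w = w" using inj_onD[OF r(3)] w(1) D_def by blast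
    then show ?thesis using q(2) w by (metis Reals_cnj_iff)
  qed
  show thesis
  proof (rule that[OF _ q(1)])
    show "open (p ` D)" "\<epsilon> > 0" by fact+
    show "q ` p ` D \<subseteq> W" using q(2) r(2) D_def by auto
    fix x :: real
    assume "dist (of_real x) (p (of_real u0)) < \<epsilon>"
    then have x: "of_real x \<in> p ` D" using \<epsilon>(2) by (auto simp: dist_commute)
    then show "of_real x \<in> p ` D \<and> q (of_real x) \<in> \<real> \<and> p (q (of_real x)) = of_real x"
      using real[of "of_real x"] q(2) by auto
  qed
qed

lemma holomorphic_inverse_Re_on_real_axis:
  fixes G :: "complex \<Rightarrow> complex"
  assumes hol: "G holomorphic_on V" and "open V" and u0: "of_real u0 \<in> V"
    and dG: "Re (deriv G (of_real u0)) \<noteq> 0"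
  obtains Q q \<epsilon> where "open Q" "q holomorphic_on Q" "q ` Q \<subseteq> V" "\<epsilon> > 0"
    "\<And>x. \<bar>x - Re (G (of_real u0))\<bar> < \<epsilon> \<Longrightarrow>
       of_real x \<in> Q \<and> q (of_real x) \<in> \<real> \<and> Re (G (q (of_real x))) = x"
proof -
  define p where "p = Re_extension G"
  define W where "W = V \<inter> cnj ` V"
  have "open W" unfolding W_def using \<open>open V\<close> open_image_cnj by blast
  have holp: "p holomorphic_on W"
    unfolding p_def W_def by (rule holomorphic_on_Re_extension[OF hol \<open>open V\<close>])
  have u0W: "of_real u0 \<in> W" using u0 unfolding W_def by (simp add: in_image_cnj_iff)
  have symm: "cnj w \<in> W \<and> p (cnj w) = cnj (p w)" if "w \<in> W" for w
    using that unfolding W_def p_def by (auto simp: in_image_cnj_iff Re_extension_cnj)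
  have dp: "deriv p (of_real u0) \<noteq> 0"
    using deriv_Re_extension_of_real[OF hol \<open>open V\<close> u0] dG p_def by simp
  obtain Q q \<epsilon> where Q: "open Q" "q holomorphic_on Q" "q ` Q \<subseteq> W" "\<epsilon> > 0"
    "\<And>x. dist (of_real x) (p (of_real u0)) < \<epsilon> \<Longrightarrow>
       of_real x \<in> Q \<and> q (of_real x) \<in> \<real> \<and> p (q (of_real x)) = of_real x"
    using holomorphic_local_inverse_real_on_real[OF holp \<open>open W\<close> u0W symm dp] by metis
  show thesis
  proof (rule that[OF Q(1,2) _ Q(4)])
    show "q ` Q \<subseteq> V" using Q(3) W_def by blast
    fix x assume "\<bar>x - Re (G (of_real u0))\<bar> < \<epsilon>"
    then have x: "of_real x \<in> Q" "q (of_real x) \<in> \<real>" "p (q (of_real x)) = of_real x"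
      using Q(5)[of x] by (auto simp: p_def dist_of_real dist_real_def)
    then obtain s where "q (of_real x) = of_real s" by (auto elim: Reals_cases)
    then show "of_real x \<in> Q \<and> q (of_real x) \<in> \<real> \<and> Re (G (q (of_real x))) = x"
      using x by (simp add: p_def)
  qed
qed

\<comment> \<open>Near \<open>Complex x0 (v x0)\<close> the level set \<open>{H \<in> \<real>}\<close> is the image of the real axis under
  the local inverse \<open>G\<close> of \<open>H\<close>. In the coordinate \<open>x = Re (G s)\<close> it is the graph of
  \<open>x \<mapsto> Im (G (q x))\<close>, the real part of the holomorphic function \<open>-\<i> * G \<circ> q\<close>.\<close>
lemma real_analytic_level_curve:
  fixes H :: "complex \<Rightarrow> complex" and v :: "real \<Rightarrow> real"
  assumes hol: "H holomorphic_on S" and "open S"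
    and curve: "\<And>z. z \<in> S \<Longrightarrow> H z \<in> \<real> \<Longrightarrow> Im z = v (Re z)"
    and z0: "Complex x0 (v x0) \<in> S" "H (Complex x0 (v x0)) \<in> \<real>"
    and transversal: "Re (deriv H (Complex x0 (v x0))) \<noteq> 0"
  shows "real_analytic_on v {x0}"
proof -
  define z0 where "z0 = Complex x0 (v x0)"
  obtain r where r: "r > 0" "ball z0 r \<subseteq> S" "inj_on H (ball z0 r)"
    using has_complex_derivative_locally_injective[OF hol z0(1) \<open>open S\<close>] transversal z0_def
    by (metis zero_complex.sel(1))
  have H: "H holomorphic_on ball z0 r" "open (ball z0 r)" "inj_on H (ball z0 r)"
    using hol r(2,3) holomorphic_on_subset by auto
  define V where "V = H ` ball z0 r"
  obtain G where G: "G holomorphic_on V" "\<And>z. z \<in> ball z0 r \<Longrightarrow> deriv H z * deriv G (H z) = 1"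
      "\<And>z. z \<in> ball z0 r \<Longrightarrow> G (H z) = z"
    using holomorphic_has_inverse[OF H] V_def by metis
  have "open V" unfolding V_def by (rule open_mapping_thm3[OF H])
  define u0 where "u0 = Re (H z0)"
  have Hz0: "H z0 = of_real u0"
    using z0(2)[folded z0_def] unfolding u0_def by (simp add: complex_is_Real_iff complex_eq_iff)
  have u0V: "of_real u0 \<in> V" using Hz0 r(1) V_def by (metis centre_in_ball imageI)
  have Gu0: "G (of_real u0) = z0" using G(3)[of z0] Hz0 r(1) by simp
  have "deriv H z0 \<noteq> 0" using transversal z0_def by auto
  then have "deriv G (of_real u0) = inverse (deriv H z0)"
    using G(2)[of z0] Hz0 r(1) by (simp add: field_simps inverse_eq_divide)
  then have "Re (deriv G (of_real u0)) \<noteq> 0"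
    using transversal z0_def by (simp add: Re_divide complex_neq_0 inverse_eq_divide)
  then obtain Q q \<epsilon> where Q: "open Q" "q holomorphic_on Q" "q ` Q \<subseteq> V" "\<epsilon> > 0"
    "\<And>x. \<bar>x - x0\<bar> < \<epsilon> \<Longrightarrow> of_real x \<in> Q \<and> q (of_real x) \<in> \<real> \<and> Re (G (q (of_real x))) = x"
    using holomorphic_inverse_Re_on_real_axis[OF G(1) \<open>open V\<close> u0V] Gu0 z0_def by (metis complex.sel(1))
  have v: "of_real x \<in> Q \<and> v x = Re (- \<i> * G (q (of_real x)))" if "\<bar>x - x0\<bar> < \<epsilon>" for x
  proof -
    have x: "of_real x \<in> Q" "q (of_real x) \<in> \<real>" "Re (G (q (of_real x))) = x"
      using Q(5)[OF that] by auto
    have "q (of_real x) \<in> V" using Q(3) x(1) by blast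
    then have "G (q (of_real x)) \<in> S" "H (G (q (of_real x))) \<in> \<real>"
      using G(3) r(2) x(2) V_def by auto
    then show ?thesis using curve x(1,3) by fastforce
  qed
  have "(G \<circ> q) holomorphic_on Q" by (rule holomorphic_on_compose_gen[OF Q(2) G(1) Q(3)])
  then have "(\<lambda>w. - \<i> * G (q w)) holomorphic_on Q" unfolding o_def by (intro holomorphic_intros)
  from real_analytic_at_locally_Re_holomorphic[OF this Q(1,4) v] show ?thesis .
qed

section \<open>Integrals over the real line and the Cauchy transform\<close>

lemma integrable_lborel_inverse_1_plus_square: "integrable lborel (\<lambda>t::real. inverse (1 + t^2))"
  using integrable_inverse_1_plus_square by (simp add: set_integrable_def einterval_eq_UNIV)

lemma integrable_bounded_by_inverse_1_plus_square:
  fixes f :: "real \<Rightarrow> 'a::{banach, second_countable_topology}"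
  assumes "f \<in> borel_measurable lborel" "\<And>t. norm (f t) \<le> C * inverse (1 + t^2)"
  shows "integrable lborel f"
proof (rule Bochner_Integration.integrable_bound[OF _ assms(1) AE_I2])
  show "integrable lborel (\<lambda>t. C * inverse (1 + t^2))"
    using integrable_lborel_inverse_1_plus_square by simp
  show "norm (f t) \<le> norm (C * inverse (1 + t^2))" for t
    using assms(2)[of t] norm_ge_zero[of "f t"] by (simp del: norm_ge_zero)
qed

lemma integrable_divide_bounded_below:
  fixes f g :: "'a \<Rightarrow> 'b::{real_normed_field, banach, second_countable_topology}"
  assumes f: "integrable M f" and [measurable]: "g \<in> borel_measurable M"
    and "0 < c" and g: "\<And>x. c \<le> norm (g x)"
  shows "integrable M (\<lambda>x. f x / g x)"
proof (rule Bochner_Integration.integrable_bound[OF _ _ AE_I2])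
  show "integrable M (\<lambda>x. norm (f x) / c)" using f by auto
  show "(\<lambda>x. f x / g x) \<in> borel_measurable M" using borel_measurable_integrable[OF f] by measurable
  show "norm (f x / g x) \<le> norm (norm (f x) / c)" for x
  proof -
    have "0 < norm (g x)" using g[of x] \<open>0 < c\<close> by linarith
    then show ?thesis using g[of x] \<open>0 < c\<close> by (simp add: norm_divide divide_left_mono)
  qed
qed

lemma integral_lborel_pos:
  fixes f :: "real \<Rightarrow> real"
  assumes f: "integrable lborel f" and pos: "AE t in lborel. 0 < f t"
  shows "0 < integral\<^sup>L lborel f"
proof -
  have "0 \<le> integral\<^sup>L lborel f" using pos by (intro integral_nonneg_AE) auto
  moreover have "integral\<^sup>L lborel f \<noteq> 0"
  proof
    assume "integral\<^sup>L lborel f = 0"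
    moreover have "AE t in lborel. 0 \<le> f t" using pos by eventually_elim simp
    ultimately have "AE t in lborel. f t = 0" using integral_nonneg_eq_0_iff_AE[OF f] by simp
    with pos have "AE t::real in lborel. False" by eventually_elim simp
    then show False by (simp add: AE_iff_measurable[of UNIV lborel "\<lambda>_. False"])
  qed
  ultimately show ?thesis by simp
qed

definition cauchy_transform :: "(real \<Rightarrow> complex) \<Rightarrow> complex \<Rightarrow> complex" where
  "cauchy_transform f z = (LINT t|lborel. f t / (z - of_real t))"

lemma Im_le_norm_diff_of_real: "Im z \<le> norm (z - of_real t)"
  using abs_Im_le_cmod[of "z - of_real t"] by simp

lemma integrable_cauchy_kernel:
  assumes f: "integrable lborel f" and z: "0 < Im z"
  shows "integrable lborel (\<lambda>t. f t / (z - of_real t))"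
  by (rule integrable_divide_bounded_below[OF f _ z Im_le_norm_diff_of_real]) measurable

lemma integrable_cauchy_kernel_power2:
  assumes f: "integrable lborel f" and z: "0 < Im z"
  shows "integrable lborel (\<lambda>t. f t / (z - of_real t)^2)"
proof (rule integrable_divide_bounded_below[OF f _ zero_less_power[OF z]])
  show "(Im z)^2 \<le> norm ((z - of_real t)^2)" for t
    using Im_le_norm_diff_of_real z by (simp add: norm_power power_mono)
qed measurable

lemma integrable_cauchy_kernel_mixed:
  assumes f: "integrable lborel f" and w: "0 < Im w" and z: "0 < Im z"
  shows "integrable lborel (\<lambda>t. f t / ((w - of_real t) * (z - of_real t)^2))"
proof (rule integrable_divide_bounded_below[OF f _ mult_pos_pos[OF w zero_less_power[OF z]]])
  show "Im w * (Im z)^2 \<le> norm ((w - of_real t) * (z - of_real t)^2)" for t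
    using Im_le_norm_diff_of_real w z by (simp add: norm_mult norm_power mult_mono power_mono)
qed measurable

lemma cauchy_transform_diff:
  assumes f: "integrable lborel f" and w: "0 < Im w" and z: "0 < Im z"
  shows "cauchy_transform f w - cauchy_transform f z + (w - z) * (LINT t|lborel. f t / (z - of_real t)^2)
    = (w - z)^2 * (LINT t|lborel. f t / ((w - of_real t) * (z - of_real t)^2))"
proof -
  have ne: "w - of_real t \<noteq> 0" "z - of_real t \<noteq> 0" for t
    using Im_le_norm_diff_of_real[of w t] Im_le_norm_diff_of_real[of z t] w z by auto
  have identity: "a / (w - of_real t) - a / (z - of_real t) + (w - z) * (a / (z - of_real t)^2)
      = (w - z)^2 * (a / ((w - of_real t) * (z - of_real t)^2))" for a t
  proof -
    have "a / A - a / Z + (A - Z) * (a / Z^2) = (A - Z)^2 * (a / (A * Z^2))"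
      if "A \<noteq> 0" "Z \<noteq> 0" for A Z :: complex
      using that by (simp add: field_simps power2_eq_square)
    from this[OF ne[of t]] show ?thesis by simp
  qed
  have "cauchy_transform f w - cauchy_transform f z + (w - z) * (LINT t|lborel. f t / (z - of_real t)^2)
      = (LINT t|lborel. f t / (w - of_real t) - f t / (z - of_real t) + (w - z) * (f t / (z - of_real t)^2))"
    using integrable_cauchy_kernel[OF f w] integrable_cauchy_kernel[OF f z]
      integrable_cauchy_kernel_power2[OF f z]
    unfolding cauchy_transform_def
    by (simp only: Bochner_Integration.integral_add Bochner_Integration.integral_diff
        Bochner_Integration.integrable_diff integral_mult_right_zero integrable_mult_right)
  also have "\<dots> = (LINT t|lborel. (w - z)^2 * (f t / ((w - of_real t) * (z - of_real t)^2)))"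
    by (intro Bochner_Integration.integral_cong) (simp_all only: identity)
  also have "\<dots> = (w - z)^2 * (LINT t|lborel. f t / ((w - of_real t) * (z - of_real t)^2))"
    by (rule integral_mult_right_zero)
  finally show ?thesis .
qed

lemma norm_integral_cauchy_kernel_mixed_le:
  assumes f: "integrable lborel f" and z: "0 < Im z" and wz: "Im z / 2 < Im w"
  shows "norm (LINT t|lborel. f t / ((w - of_real t) * (z - of_real t)^2))
    \<le> (LINT t|lborel. norm (f t)) * (2 / Im z ^ 3)"
proof -
  have "norm (LINT t|lborel. f t / ((w - of_real t) * (z - of_real t)^2))
      \<le> (LINT t|lborel. norm (f t) * (2 / Im z ^ 3))"
  proof (rule Bochner_Integration.integral_norm_bound_integral)
    show "integrable lborel (\<lambda>t. f t / ((w - of_real t) * (z - of_real t)^2))"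
      using integrable_cauchy_kernel_mixed[OF f _ z] wz z by simp
    show "integrable lborel (\<lambda>t. norm (f t) * (2 / Im z ^ 3))" using f by simp
    fix t
    have low: "Im z / 2 * Im z ^ 2 \<le> norm (w - of_real t) * norm (z - of_real t) ^ 2"
      using Im_le_norm_diff_of_real[of w t] Im_le_norm_diff_of_real[of z t] wz z
      by (intro mult_mono power_mono) auto
    have pos: "0 < Im z / 2 * Im z ^ 2" using z by simp
    have "norm (f t / ((w - of_real t) * (z - of_real t)^2))
        = norm (f t) / (norm (w - of_real t) * norm (z - of_real t) ^ 2)"
      by (simp add: norm_divide norm_mult norm_power)
    also have "\<dots> \<le> norm (f t) / (Im z / 2 * Im z ^ 2)"
      using low pos by (intro divide_left_mono) (auto intro: mult_pos_pos)
    also have "\<dots> = norm (f t) * (2 / Im z ^ 3)"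
      using z by (simp add: power2_eq_square power3_eq_cube)
    finally show "norm (f t / ((w - of_real t) * (z - of_real t)^2)) \<le> norm (f t) * (2 / Im z ^ 3)" .
  qed
  then show ?thesis by simp
qed

lemma has_field_derivative_cauchy_transform:
  assumes f: "integrable lborel f" and z: "0 < Im z"
  shows "(cauchy_transform f has_field_derivative - (LINT t|lborel. f t / (z - of_real t)^2)) (at z)"
proof -
  define D where "D = - (LINT t|lborel. f t / (z - of_real t)^2)"
  define C where "C = (LINT t|lborel. norm (f t)) * (2 / Im z ^ 3)"
  have bound: "norm ((cauchy_transform f w - cauchy_transform f z) / (w - z) - D) \<le> norm (w - z) * C"
    if w: "w \<noteq> z" "dist w z < Im z / 2" for w
  proof -
    have "\<bar>Im w - Im z\<bar> \<le> norm (w - z)" using abs_Im_le_cmod[of "w - z"] by simp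
    then have wz: "Im z / 2 < Im w" using w by (simp add: dist_norm)
    then have "norm (LINT t|lborel. f t / ((w - of_real t) * (z - of_real t)^2)) \<le> C"
      unfolding C_def by (rule norm_integral_cauchy_kernel_mixed_le[OF f z])
    moreover have "(cauchy_transform f w - cauchy_transform f z) / (w - z) - D
        = (w - z) * (LINT t|lborel. f t / ((w - of_real t) * (z - of_real t)^2))"
      using cauchy_transform_diff[OF f _ z, of w] wz z w(1) unfolding D_def
      by (simp add: field_simps power2_eq_square)
    ultimately show ?thesis by (simp add: norm_mult mult_left_mono)
  qed
  have "((\<lambda>w. (cauchy_transform f w - cauchy_transform f z) / (w - z) - D) \<longlongrightarrow> 0) (at z)"
  proof (rule Lim_null_comparison)
    show "\<forall>\<^sub>F w in at z. norm ((cauchy_transform f w - cauchy_transform f z) / (w - z) - D)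
        \<le> norm (w - z) * C"
      unfolding eventually_at using z bound by (intro exI[of _ "Im z / 2"]) auto
    show "((\<lambda>w. norm (w - z) * C) \<longlongrightarrow> 0) (at z)"
      by (rule tendsto_eq_intros refl | simp)+
  qed
  then have "((\<lambda>w. (cauchy_transform f w - cauchy_transform f z) / (w - z)) \<longlongrightarrow> D) (at z)"
    by (rule LIM_zero_cancel)
  then show ?thesis unfolding D_def has_field_derivative_iff .
qed

lemma holomorphic_on_cauchy_transform:
  "integrable lborel f \<Longrightarrow> cauchy_transform f holomorphic_on {z. 0 < Im z}"
  using has_field_derivative_cauchy_transform
  by (subst holomorphic_on_open) (auto simp: open_halfspace_Im_gt)

lemma Im_mult_cauchy_transform_of_real:
  fixes f :: "real \<Rightarrow> real"
  assumes f: "integrable lborel f" and z: "0 < Im z"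
  shows "Im (z * cauchy_transform (\<lambda>t. of_real (f t)) z)
    = - Im z * (LINT t|lborel. f t * t / ((Re z - t)^2 + (Im z)^2))"
proof -
  have int: "integrable lborel (\<lambda>t. of_real (f t) / (z - of_real t))"
    using integrable_cauchy_kernel[OF _ z] f by simp
  have Im_kernel: "Im (z * (of_real c / (z - of_real t))) = - Im z * (c * t / ((Re z - t)^2 + (Im z)^2))"
    for c t :: real
  proof -
    have "z * (of_real c / (z - of_real t)) = of_real c * (z / (z - of_real t))" by simp
    moreover have "Im (of_real c * q) = c * Im q" for q by simp
    ultimately have "Im (z * (of_real c / (z - of_real t))) = c * Im (z / (z - of_real t))" by metis
    also have "Im (z / (z - of_real t)) = - (Im z * t) / ((Re z - t)^2 + (Im z)^2)"
      by (simp add: Im_divide power2_eq_square algebra_simps)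
    finally show ?thesis by simp
  qed
  have "z * cauchy_transform (\<lambda>t. of_real (f t)) z = (LINT t|lborel. z * (of_real (f t) / (z - of_real t)))"
    unfolding cauchy_transform_def by (rule integral_mult_right_zero[symmetric])
  then have "Im (z * cauchy_transform (\<lambda>t. of_real (f t)) z)
      = (LINT t|lborel. Im (z * (of_real (f t) / (z - of_real t))))"
    using integrable_mult_right[OF int] by simp
  also have "\<dots> = - Im z * (LINT t|lborel. f t * t / ((Re z - t)^2 + (Im z)^2))"
    unfolding Im_kernel by (rule integral_mult_right_zero)
  finally show ?thesis .
qed

section \<open>The kernel \<open>k\<close> and the functions \<open>F\<^sub>k\<close>, \<open>H\<^sub>k\<close>, \<open>v\<^sub>k\<close>\<close>

lemma abs_le_one_plus_square: "\<bar>s\<bar> \<le> 1 + s^2" for s :: real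
proof -
  have "0 \<le> (\<bar>s\<bar> - 1)^2" by simp
  then have "2 * \<bar>s\<bar> \<le> 1 + s^2" by (simp add: power2_diff power2_abs)
  then show ?thesis by simp
qed

lemma one_plus_abs_le_peetre: "1 + \<bar>x\<bar> \<le> 2 * (1 + \<bar>t\<bar>) * (1 + (x - t)^2)"
  for x t :: real
proof -
  have "1 + \<bar>x\<bar> \<le> 1 + \<bar>t\<bar> + \<bar>x - t\<bar>" using abs_triangle_ineq[of t "x - t"] by simp
  also have "\<dots> \<le> 1 + \<bar>t\<bar> + \<bar>x - t\<bar> + \<bar>t\<bar> * \<bar>x - t\<bar>" by simp
  also have "\<dots> = (1 + \<bar>t\<bar>) * (1 + \<bar>x - t\<bar>)" by (simp add: algebra_simps)
  also have "\<dots> \<le> (1 + \<bar>t\<bar>) * (2 * (1 + (x - t)^2))"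
    using abs_le_one_plus_square[of "x - t"]
    by (intro mult_left_mono) (smt (verit) zero_le_power2, simp)
  also have "\<dots> = 2 * (1 + \<bar>t\<bar>) * (1 + (x - t)^2)" by (simp add: algebra_simps)
  finally show ?thesis .
qed

lemma integral_inverse_shifted_interval:
  fixes x y c :: real
  assumes "0 < y" "y \<le> 1"
  shows "(LINT t|lborel. indicator {x + y .. x + 1} t * (c / (t - x))) = c * - ln y"
proof -
  have cont: "continuous_on {x + y .. x + 1} (\<lambda>t. c / (t - x))"
    using assms by (intro continuous_intros) auto
  have "(LINT t|lborel. indicator {x + y .. x + 1} t *\<^sub>R (c / (t - x)))
      = c * ln ((x + 1) - x) - c * ln ((x + y) - x)"
  proof (rule integral_FTC_atLeastAtMost[OF _ _ cont])
    fix t assume "x + y \<le> t" "t \<le> x + 1"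
    then have "0 < t - x" using assms by simp
    then have "((\<lambda>t. c * ln (t - x)) has_real_derivative c / (t - x)) (at t)"
      by (auto intro!: derivative_eq_intros simp: field_simps)
    then show "((\<lambda>t. c * ln (t - x)) has_vector_derivative c / (t - x)) (at t within {x + y .. x + 1})"
      by (simp add: has_real_derivative_iff_has_vector_derivative has_vector_derivative_at_within)
  qed (use assms in simp)
  then show ?thesis by simp
qed

lemma Fk_reflect: "Fk (\<lambda>t. k (- t)) (- x) y = Fk k x y"
proof -
  have "Fk k x y = (LINT t|lborel. \<bar>- t\<bar> * k (- t) / ((x - - t)^2 + y^2))"
    unfolding Fk_def by (rule lborel_integral_real_affine[where c = "-1" and t = 0, simplified])
  also have "\<dots> = Fk (\<lambda>t. k (- t)) (- x) y"
    unfolding Fk_def by (simp add: power2_eq_square algebra_simps)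
  finally show ?thesis ..
qed

lemma Hk_eq_cauchy_transform: "Hk k z = z + z * cauchy_transform (\<lambda>t. of_real (sgn t * k t)) z"
  unfolding Hk_def cauchy_transform_def ..

locale admissible_kernel =
  fixes k :: "real \<Rightarrow> real" and B :: real
  assumes measurable_k [measurable]: "k \<in> borel_measurable borel"
    and pos: "\<And>t. t \<noteq> 0 \<Longrightarrow> 0 < k t"
    and mono_neg: "mono_on {..<0} k"
    and antimono_pos: "antimono_on {0<..} k"
    and decay: "\<And>t. t \<noteq> 0 \<Longrightarrow> (1 + t^2)^2 * k t \<le> B"
begin

lemma admissible_kernel_reflect: "admissible_kernel (\<lambda>t. k (- t)) B"
proof
  show "(\<lambda>t. k (- t)) \<in> borel_measurable borel" by measurable
  show "mono_on {..<0} (\<lambda>t. k (- t))" using antimono_pos by (auto simp: monotone_on_def)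
  show "antimono_on {0<..} (\<lambda>t. k (- t))" using mono_neg by (auto simp: monotone_on_def)
  show "0 < k (- t)" if "t \<noteq> 0" for t using pos[of "- t"] that by simp
  show "(1 + t^2)^2 * k (- t) \<le> B" if "t \<noteq> 0" for t using decay[of "- t"] that by simp
qed

lemma B_pos: "0 < B"
  using pos[of 1] decay[of 1] by (smt (verit) mult_pos_pos zero_less_power)

lemma k_le: "t \<noteq> 0 \<Longrightarrow> (1 + t^2) * k t \<le> B * inverse (1 + t^2)"
proof -
  assume t: "t \<noteq> 0"
  have p: "0 < 1 + t^2" by (simp add: add_pos_nonneg)
  have "(1 + t^2) * k t = (1 + t^2)^2 * k t / (1 + t^2)" using p by (simp add: power2_eq_square)
  also have "\<dots> \<le> B / (1 + t^2)" using decay[OF t] p by (simp add: divide_right_mono)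
  finally show ?thesis by (simp add: field_simps)
qed

lemma abs_mult_k_nonneg: "0 \<le> \<bar>t\<bar> * k t"
  using pos[of t] by (cases "t = 0") auto

lemma integrable_sgn_mult_k: "integrable lborel (\<lambda>t. sgn t * k t)"
proof (rule integrable_bounded_by_inverse_1_plus_square)
  show "norm (sgn t * k t) \<le> B * inverse (1 + t^2)" for t
  proof (cases "t = 0")
    case False
    then have "norm (sgn t * k t) \<le> (1 + t^2) * k t" using pos[of t] by (simp add: abs_mult)
    then show ?thesis using k_le[OF False] by linarith
  qed (use B_pos in simp)
qed measurable

lemma integrable_moment: "integrable lborel (\<lambda>t. \<bar>t\<bar> * (1 + \<bar>t\<bar>) * k t)"
proof (rule integrable_bounded_by_inverse_1_plus_square)
  show "norm (\<bar>t\<bar> * (1 + \<bar>t\<bar>) * k t) \<le> 2 * B * inverse (1 + t^2)" for t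
  proof (cases "t = 0")
    case False
    have "\<bar>t\<bar> * (1 + \<bar>t\<bar>) \<le> 2 * (1 + t^2)"
      using abs_le_one_plus_square[of t] by (simp add: algebra_simps power2_eq_square abs_mult_self)
    then have "\<bar>t\<bar> * (1 + \<bar>t\<bar>) * k t \<le> 2 * ((1 + t^2) * k t)"
      using pos[OF False] by (simp add: mult_right_mono)
    also have "\<dots> \<le> 2 * B * inverse (1 + t^2)" using k_le[OF False] by simp
    finally show ?thesis using pos[OF False] by (simp add: abs_mult)
  qed (use B_pos in simp)
qed measurable

lemma integrable_abs_mult_k: "integrable lborel (\<lambda>t. \<bar>t\<bar> * k t)"
proof (rule integrable_bounded_by_inverse_1_plus_square)
  show "norm (\<bar>t\<bar> * k t) \<le> B * inverse (1 + t^2)" for t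
  proof (cases "t = 0")
    case False
    then have "norm (\<bar>t\<bar> * k t) \<le> (1 + t^2) * k t"
      using pos[OF False] abs_le_one_plus_square[of t] by (simp add: abs_mult mult_right_mono)
    then show ?thesis using k_le[OF False] by linarith
  qed (use B_pos in simp)
qed measurable

definition abs_moment :: real where
  "abs_moment = (LINT t|lborel. \<bar>t\<bar> * k t)"

lemma integrable_Fk_integrand:
  "0 < y \<Longrightarrow> integrable lborel (\<lambda>t. \<bar>t\<bar> * k t / ((x - t)^2 + y^2))"
  by (rule integrable_divide_bounded_below[where c = "y^2", OF integrable_abs_mult_k]) auto

definition Jk :: "real \<Rightarrow> real \<Rightarrow> real \<Rightarrow> real" where
  "Jk x a b = (LINT t|lborel. \<bar>t\<bar> * k t / (((x - t)^2 + a^2) * ((x - t)^2 + b^2)))"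

lemma integrable_Jk_integrand:
  assumes "0 < a" "0 < b"
  shows "integrable lborel (\<lambda>t. \<bar>t\<bar> * k t / (((x - t)^2 + a^2) * ((x - t)^2 + b^2)))"
  by (rule integrable_divide_bounded_below[where c = "a^2 * b^2", OF integrable_abs_mult_k])
     (use assms in \<open>auto intro: mult_mono\<close>)

lemma Fk_diff_eq:
  assumes a: "0 < a" and b: "0 < b"
  shows "Fk k x a - Fk k x b = (b^2 - a^2) * Jk x a b"
proof -
  have "Fk k x a - Fk k x b
      = (LINT t|lborel. \<bar>t\<bar> * k t / ((x - t)^2 + a^2) - \<bar>t\<bar> * k t / ((x - t)^2 + b^2))"
    unfolding Fk_def using integrable_Fk_integrand[OF a] integrable_Fk_integrand[OF b] by simp
  also have "\<dots> = (LINT t|lborel. (b^2 - a^2) * (\<bar>t\<bar> * k t / (((x - t)^2 + a^2) * ((x - t)^2 + b^2))))"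
  proof (rule Bochner_Integration.integral_cong[OF refl])
    fix t
    have "(x - t)^2 + a^2 \<noteq> 0" "(x - t)^2 + b^2 \<noteq> 0" using a b by (auto simp: add_nonneg_eq_0_iff)
    then show "\<bar>t\<bar> * k t / ((x - t)^2 + a^2) - \<bar>t\<bar> * k t / ((x - t)^2 + b^2)
        = (b^2 - a^2) * (\<bar>t\<bar> * k t / (((x - t)^2 + a^2) * ((x - t)^2 + b^2)))"
      by (simp add: field_simps)
  qed
  also have "\<dots> = (b^2 - a^2) * Jk x a b" unfolding Jk_def by (rule integral_mult_right_zero)
  finally show ?thesis .
qed

lemma Jk_pos:
  assumes "0 < a" "0 < b" shows "0 < Jk x a b"
proof -
  have "AE t in lborel. 0 < \<bar>t\<bar> * k t / (((x - t)^2 + a^2) * ((x - t)^2 + b^2))"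
    using AE_lborel_singleton[of 0] by eventually_elim (use assms pos in \<open>simp add: sum_power2_gt_zero_iff\<close>)
  then show ?thesis
    unfolding Jk_def by (rule integral_lborel_pos[OF integrable_Jk_integrand[OF assms]])
qed

lemma Jk_le: "0 < a \<Longrightarrow> 0 < b \<Longrightarrow> Jk x a b \<le> abs_moment / (a^2 * b^2)"
  unfolding Jk_def abs_moment_def
  by (subst integral_divide_zero[symmetric], intro integral_mono integrable_Jk_integrand)
     (auto intro!: divide_left_mono mult_mono abs_mult_k_nonneg integrable_abs_mult_k
       simp: sum_power2_gt_zero_iff)

lemma Jk_antimono:
  assumes "0 < a" "0 < b" "b \<le> c"
  shows "Jk x a c \<le> Jk x a b"
  unfolding Jk_def using assms
  by (intro integral_mono integrable_Jk_integrand)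
     (auto intro!: divide_left_mono mult_left_mono power_mono abs_mult_k_nonneg mult_pos_pos
       simp: sum_power2_gt_zero_iff)

lemma Fk_strict_antimono:
  assumes "0 < a" "a < b" shows "Fk k x b < Fk k x a"
proof -
  have "0 < (b^2 - a^2) * Jk x a b"
    using assms Jk_pos[of a b x] power_strict_mono[of a b 2] by simp
  then show ?thesis using Fk_diff_eq[of a b x] assms by simp
qed

lemma Fk_le: "0 < y \<Longrightarrow> Fk k x y \<le> abs_moment / y^2"
  unfolding Fk_def abs_moment_def
  by (subst integral_divide_zero[symmetric], intro integral_mono integrable_Fk_integrand)
     (auto intro!: divide_left_mono abs_mult_k_nonneg integrable_abs_mult_k
       simp: sum_power2_gt_zero_iff)

lemma isCont_Fk:
  assumes y: "0 < y" shows "isCont (Fk k x) y"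
proof -
  have "((\<lambda>s. Fk k x s - Fk k x y) \<longlongrightarrow> 0) (at y)"
  proof (rule Lim_null_comparison)
    show "\<forall>\<^sub>F s in at y. norm (Fk k x s - Fk k x y) \<le> \<bar>y^2 - s^2\<bar> * (abs_moment / (s^2 * y^2))"
      unfolding eventually_at
    proof (intro exI[of _ y] conjI ballI impI)
      fix s assume "s \<noteq> y \<and> dist s y < y"
      then have s: "0 < s" by (auto simp: dist_real_def)
      have "norm (Fk k x s - Fk k x y) = \<bar>y^2 - s^2\<bar> * Jk x s y"
        using Fk_diff_eq[OF s y, of x] Jk_pos[OF s y, of x] by (simp add: abs_mult)
      also have "\<dots> \<le> \<bar>y^2 - s^2\<bar> * (abs_moment / (s^2 * y^2))"
        by (rule mult_left_mono[OF Jk_le[OF s y]]) simp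
      finally show "norm (Fk k x s - Fk k x y) \<le> \<bar>y^2 - s^2\<bar> * (abs_moment / (s^2 * y^2))" .
    qed (rule y)
    have "isCont (\<lambda>s. \<bar>y^2 - s^2\<bar> * (abs_moment / (s^2 * y^2))) y"
      using y by (intro continuous_intros) auto
    then show "((\<lambda>s. \<bar>y^2 - s^2\<bar> * (abs_moment / (s^2 * y^2))) \<longlongrightarrow> 0) (at y)"
      unfolding isCont_def by simp
  qed
  then show ?thesis unfolding isCont_def by (rule LIM_zero_cancel)
qed

lemma Fk_ge_log:
  assumes x: "0 \<le> x" and y: "0 < y" "y < 1"
  shows "k (x + 1) / 2 * - ln y \<le> Fk k x y"
proof -
  define \<kappa> where "\<kappa> = k (x + 1)"
  have \<kappa>: "0 < \<kappa>" unfolding \<kappa>_def using pos[of "x + 1"] x by simp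
  have "(LINT t|lborel. indicator {x + y .. x + 1} t * (\<kappa> / 2 / (t - x))) \<le> Fk k x y"
    unfolding Fk_def
  proof (rule integral_mono[OF _ integrable_Fk_integrand[OF y(1)]])
    show "integrable lborel (\<lambda>t. indicator {x + y .. x + 1} t * (\<kappa> / 2 / (t - x)))"
      using borel_integrable_atLeastAtMost[of "x + y" "x + 1" "\<lambda>t. \<kappa> / 2 / (t - x)"] y
      by (auto intro!: continuous_intros simp: mult.commute)
    fix t
    show "indicator {x + y .. x + 1} t * (\<kappa> / 2 / (t - x)) \<le> \<bar>t\<bar> * k t / ((x - t)^2 + y^2)"
    proof (cases "t \<in> {x + y .. x + 1}")
      case True
      define u where "u = t - x"
      have u: "y \<le> u" "0 < u" "u \<le> \<bar>t\<bar>" using True y x u_def by auto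
      have "\<kappa> \<le> k t" unfolding \<kappa>_def using True x y(1) antimono_pos by (auto simp: monotone_on_def)
      then have num: "u * \<kappa> \<le> \<bar>t\<bar> * k t" using u \<kappa> by (intro mult_mono) auto
      have den: "(x - t)^2 + y^2 \<le> 2 * u^2"
        using power_mono[OF u(1), of 2] y u_def by (simp add: power2_commute)
      have "indicator {x + y .. x + 1} t * (\<kappa> / 2 / (t - x)) = u * \<kappa> / (2 * u^2)"
        using True u by (simp add: u_def power2_eq_square)
      also have "\<dots> \<le> \<bar>t\<bar> * k t / (2 * u^2)" using num u by (intro divide_right_mono) auto
      also have "\<dots> \<le> \<bar>t\<bar> * k t / ((x - t)^2 + y^2)"
        using den y u(2) by (intro divide_left_mono abs_mult_k_nonneg) (auto simp: sum_power2_gt_zero_iff)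
      finally show ?thesis .
    qed (simp add: abs_mult_k_nonneg sum_power2_gt_zero_iff)
  qed
  then show ?thesis
    using integral_inverse_shifted_interval[of y x "\<kappa> / 2"] y unfolding \<kappa>_def by simp
qed

lemma ex_Fk_gt_1_nonneg:
  assumes "0 \<le> x" shows "\<exists>y>0. 1 < Fk k x y"
proof -
  define \<kappa> where "\<kappa> = k (x + 1)"
  have \<kappa>: "0 < \<kappa>" unfolding \<kappa>_def using pos[of "x + 1"] assms by simp
  define y where "y = exp (- (2 / \<kappa> + 1))"
  have "0 < 2 / \<kappa> + 1" using \<kappa> by (simp add: add_pos_pos)
  then have y: "0 < y" "y < 1" unfolding y_def by auto
  have "1 < 1 + \<kappa> / 2" using \<kappa> by simp
  also have "\<dots> = \<kappa> / 2 * - ln y" unfolding y_def using \<kappa> by (simp add: field_simps)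
  also have "\<dots> \<le> Fk k x y" unfolding \<kappa>_def by (rule Fk_ge_log[OF assms y])
  finally show ?thesis using y by blast
qed

lemma ex_Fk_gt_1: "\<exists>y>0. 1 < Fk k x y"
proof (cases "0 \<le> x")
  case False
  interpret reflected: admissible_kernel "\<lambda>t. k (- t)" B by (rule admissible_kernel_reflect)
  show ?thesis using reflected.ex_Fk_gt_1_nonneg[of "- x"] False by (simp add: Fk_reflect)
qed (rule ex_Fk_gt_1_nonneg)

lemma ex1_Fk_eq_1: "\<exists>!y. 0 < y \<and> Fk k x y = 1"
proof -
  obtain y1 where y1: "0 < y1" "1 < Fk k x y1" using ex_Fk_gt_1 by blast
  define y2 where "y2 = y1 + abs_moment + 1"
  have "0 \<le> abs_moment" unfolding abs_moment_def by (simp add: abs_mult_k_nonneg)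
  then have y2: "1 < y2" "abs_moment < y2" "y1 \<le> y2" using y1 by (auto simp: y2_def)
  moreover have "y2 \<le> y2^2" using y2 by (simp add: power2_eq_square)
  ultimately have "abs_moment < y2^2" by linarith
  then have "abs_moment / y2^2 < 1" using y2 by (simp add: divide_less_eq)
  then have "Fk k x y2 < 1" using Fk_le[of y2 x] y2 by linarith
  then obtain y where y: "y1 \<le> y" "y \<le> y2" "Fk k x y = 1"
    using IVT2[of "Fk k x" y2 1 y1] y1 y2 isCont_Fk by fastforce
  show ?thesis
  proof (rule ex1I[of _ y])
    show "0 < y \<and> Fk k x y = 1" using y y1 by simp
    show "y' = y" if "0 < y' \<and> Fk k x y' = 1" for y'
      using Fk_strict_antimono[of y' y x] Fk_strict_antimono[of y y' x] y y1 that
      by (cases y' y rule: linorder_cases) auto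
  qed
qed

lemma vk_pos: "0 < vk k x" and Fk_vk: "Fk k x (vk k x) = 1"
  using theI'[OF ex1_Fk_eq_1[of x]] unfolding vk_def by auto

lemma Fk_eq_1_iff: "0 < y \<Longrightarrow> Fk k x y = 1 \<longleftrightarrow> y = vk k x"
  using ex1_Fk_eq_1[of x] vk_pos[of x] Fk_vk[of x] by blast

lemma Fk_less_1_iff: "0 < y \<Longrightarrow> Fk k x y < 1 \<longleftrightarrow> vk k x < y"
  using Fk_strict_antimono[of "vk k x" y x] Fk_strict_antimono[of y "vk k x" x] vk_pos[of x] Fk_vk[of x]
  by (cases y "vk k x" rule: linorder_cases) auto

lemma Fk_le_decay:
  assumes e: "0 < e"
  shows "Fk k x e \<le> 2 / min 1 (e^2) / (1 + \<bar>x\<bar>) * (LINT t|lborel. \<bar>t\<bar> * (1 + \<bar>t\<bar>) * k t)"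
proof -
  define \<delta> where "\<delta> = min 1 (e^2)"
  have \<delta>: "0 < \<delta>" "\<delta> \<le> 1" "\<delta> \<le> e^2" unfolding \<delta>_def using e by auto
  have "Fk k x e \<le> (LINT t|lborel. 2 / \<delta> / (1 + \<bar>x\<bar>) * (\<bar>t\<bar> * (1 + \<bar>t\<bar>) * k t))"
    unfolding Fk_def
  proof (rule integral_mono[OF integrable_Fk_integrand[OF e]])
    show "integrable lborel (\<lambda>t. 2 / \<delta> / (1 + \<bar>x\<bar>) * (\<bar>t\<bar> * (1 + \<bar>t\<bar>) * k t))"
      using integrable_moment by simp
    fix t
    define P where "P = 1 + (x - t)^2"
    have P: "0 < P" unfolding P_def by (simp add: add_pos_nonneg)
    have X: "0 < 1 + \<bar>x\<bar>" by (simp add: add_pos_nonneg)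
    have "\<delta> * P \<le> (x - t)^2 + e^2"
      using \<delta> mult_right_mono[OF \<delta>(2) zero_le_power2[of "x - t"]] by (simp add: P_def algebra_simps)
    then have "\<bar>t\<bar> * k t / ((x - t)^2 + e^2) \<le> \<bar>t\<bar> * k t / (\<delta> * P)"
      using \<delta> P e by (intro divide_left_mono abs_mult_k_nonneg) (auto simp: sum_power2_gt_zero_iff)
    also have "\<dots> = \<bar>t\<bar> * k t / \<delta> * (1 / P)" by simp
    also have "\<dots> \<le> \<bar>t\<bar> * k t / \<delta> * (2 * (1 + \<bar>t\<bar>) / (1 + \<bar>x\<bar>))"
    proof (rule mult_left_mono)
      show "1 / P \<le> 2 * (1 + \<bar>t\<bar>) / (1 + \<bar>x\<bar>)"
        using one_plus_abs_le_peetre[of x t] P X by (simp add: field_simps P_def)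
    qed (use \<delta> abs_mult_k_nonneg[of t] in simp)
    also have "\<dots> = 2 / \<delta> / (1 + \<bar>x\<bar>) * (\<bar>t\<bar> * (1 + \<bar>t\<bar>) * k t)"
      by (simp add: field_simps)
    finally show "\<bar>t\<bar> * k t / ((x - t)^2 + e^2) \<le> 2 / \<delta> / (1 + \<bar>x\<bar>) * (\<bar>t\<bar> * (1 + \<bar>t\<bar>) * k t)" .
  qed
  then show ?thesis unfolding \<delta>_def by simp
qed

lemma tendsto_vk_at_infinity: "(vk k \<longlongrightarrow> 0) at_infinity"
proof (rule tendstoI)
  fix e :: real assume e: "0 < e"
  define C where "C = 2 / min 1 (e^2) * (LINT t|lborel. \<bar>t\<bar> * (1 + \<bar>t\<bar>) * k t)"
  show "\<forall>\<^sub>F x in at_infinity. dist (vk k x) 0 < e"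
    unfolding eventually_at_infinity
  proof (intro exI[of _ C] allI impI)
    fix x :: real assume "C \<le> norm x"
    then have "C / (1 + \<bar>x\<bar>) < 1" by (simp add: divide_less_eq add_pos_nonneg)
    then have "Fk k x e < 1" using Fk_le_decay[OF e, of x] unfolding C_def by simp
    then show "dist (vk k x) 0 < e" using Fk_less_1_iff[OF e] vk_pos[of x] by simp
  qed
qed

lemma Im_Hk:
  assumes z: "0 < Im z"
  shows "Im (Hk k z) = Im z * (1 - Fk k (Re z) (Im z))"
proof -
  have "(\<lambda>t. sgn t * k t * t / ((Re z - t)^2 + (Im z)^2)) = (\<lambda>t. \<bar>t\<bar> * k t / ((Re z - t)^2 + (Im z)^2))"
    by (auto simp: fun_eq_iff sgn_if)
  then show ?thesis
    using Im_mult_cauchy_transform_of_real[OF integrable_sgn_mult_k z]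
    by (simp add: Hk_eq_cauchy_transform Fk_def algebra_simps)
qed

lemma holomorphic_on_Hk: "Hk k holomorphic_on {z. 0 < Im z}"
proof -
  have "cauchy_transform (\<lambda>t. of_real (sgn t * k t)) holomorphic_on {z. 0 < Im z}"
    by (intro holomorphic_on_cauchy_transform integrable_of_real integrable_sgn_mult_k)
  then show ?thesis
    unfolding Hk_eq_cauchy_transform[abs_def] by (intro holomorphic_intros)
qed

lemma Hk_real_iff: "0 < Im z \<Longrightarrow> Hk k z \<in> \<real> \<longleftrightarrow> Im z = vk k (Re z)"
  using Im_Hk[of z] Fk_eq_1_iff[of "Im z" "Re z"] by (auto simp: complex_is_Real_iff)

lemma Im_Hk_pos_iff: "0 < Im z \<Longrightarrow> 0 < Im (Hk k z) \<longleftrightarrow> vk k (Re z) < Im z"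
  using Im_Hk[of z] Fk_less_1_iff[of "Im z" "Re z"] by (simp add: zero_less_mult_iff)

lemma Re_deriv_Hk_pos: "0 < Re (deriv (Hk k) (Complex x (vk k x)))"
proof -
  define y0 where "y0 = vk k x"
  define h where "h y = Im (Hk k (Complex x y))" for y
  have y0: "0 < y0" "Fk k x y0 = 1" using vk_pos Fk_vk y0_def by auto
  have "(Hk k has_field_derivative deriv (Hk k) (Complex x y0)) (at (Complex x y0))"
    using holomorphic_on_Hk y0(1) open_halfspace_Im_gt by (intro holomorphic_derivI) auto
  then have dh: "(h has_real_derivative Re (deriv (Hk k) (Complex x y0))) (at y0)"
    unfolding h_def by (rule has_real_derivative_Im_vertical)
  define c where "c = 2 * y0^2 * Jk x y0 (y0 + 1)"
  have J1: "0 < Jk x y0 (y0 + 1)" using Jk_pos y0 by simp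
  then have "0 < c" unfolding c_def using y0 by simp
  moreover have "c \<le> Re (deriv (Hk k) (Complex x y0))"
  proof (rule has_real_derivative_ge_if_above_line[OF dh zero_less_one])
    fix y assume y: "y0 < y" "y < y0 + 1"
    have "h y0 = 0" unfolding h_def using Im_Hk[of "Complex x y0"] y0 by simp
    have hy: "h y = y * ((y^2 - y0^2) * Jk x y0 y)"
      unfolding h_def using Im_Hk[of "Complex x y"] Fk_diff_eq[OF y0(1), of y x] y y0 by simp
    have "(y - y0) * (2 * y0) \<le> (y - y0) * (y + y0)" using y by (intro mult_left_mono) auto
    then have sq: "(y - y0) * (2 * y0) \<le> y^2 - y0^2" by (simp add: power2_eq_square algebra_simps)
    have "0 \<le> (y - y0) * (2 * y0)" using y y0 by simp
    moreover have "Jk x y0 (y0 + 1) \<le> Jk x y0 y" using Jk_antimono[OF y0(1), of y] y y0 by simp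
    ultimately have "y0 * ((y - y0) * (2 * y0) * Jk x y0 (y0 + 1)) \<le> h y"
      unfolding hy using y y0 sq J1 by (intro mult_mono mult_nonneg_nonneg) auto
    then show "h y0 + c * (y - y0) \<le> h y"
      using \<open>h y0 = 0\<close> by (simp add: c_def power2_eq_square algebra_simps)
  qed
  ultimately show ?thesis unfolding y0_def by linarith
qed

lemma real_analytic_vk: "real_analytic_on (vk k) UNIV"
proof -
  have "real_analytic_on (vk k) {x}" for x
  proof (rule real_analytic_level_curve[OF holomorphic_on_Hk open_halfspace_Im_gt])
    show "Im z = vk k (Re z)" if "z \<in> {z. 0 < Im z}" "Hk k z \<in> \<real>" for z
      using that Hk_real_iff by auto
    show "Complex x (vk k x) \<in> {z. 0 < Im z}" "Hk k (Complex x (vk k x)) \<in> \<real>"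
      using vk_pos[of x] Hk_real_iff[of "Complex x (vk k x)"] by auto
    show "Re (deriv (Hk k) (Complex x (vk k x))) \<noteq> 0" using Re_deriv_Hk_pos[of x] by simp
  qed
  then show ?thesis unfolding real_analytic_on_def by blast
qed

lemma Hk_real_set: "{z. 0 < Im z \<and> Hk k z \<in> \<real>} = {Complex x (vk k x) | x. True}"
  using Hk_real_iff vk_pos by (auto simp: complex_eq_iff intro!: exI[of _ "Re _"])

lemma Im_Hk_pos_set: "{z. 0 < Im z \<and> 0 < Im (Hk k z)} = {Complex x y | x y. vk k x < y}"
  using Im_Hk_pos_iff vk_pos by (fastforce simp: complex_eq_iff dest: order.strict_trans)

end

theorem lemma3p1:
  fixes k k1 k2 :: "real \<Rightarrow> real"
  assumes d1: "\<And>t. t \<noteq> 0 \<Longrightarrow> (k has_real_derivative k1 t) (at t)"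
    and d2: "\<And>t. t \<noteq> 0 \<Longrightarrow> (k1 has_real_derivative k2 t) (at t)"
    and c2: "continuous_on (- {0}) k2"
    and bdd: "\<And>m::nat. m \<le> 2 \<Longrightarrow> \<exists>B. \<forall>t. t \<noteq> 0 \<longrightarrow>
                \<bar>(1 + t\<^sup>2) ^ m * k t\<bar> \<le> B \<and> \<bar>(1 + t\<^sup>2) ^ m * k1 t\<bar> \<le> B
                \<and> \<bar>(1 + t\<^sup>2) ^ m * k2 t\<bar> \<le> B"
    and incr: "mono_on {..<0} k"
    and decr: "antimono_on {0<..} k"
    and pos: "\<And>t. t \<noteq> 0 \<Longrightarrow> 0 < k t"
  shows "(\<forall>x. \<exists>!y. 0 < y \<and> Fk k x y = 1)
    \<and> {z. 0 < Im z \<and> Hk k z \<in> \<real>} = {Complex x (vk k x) | x. True}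
    \<and> {z. 0 < Im z \<and> 0 < Im (Hk k z)} = {Complex x y | x y. vk k x < y}
    \<and> real_analytic_on (vk k) UNIV
    \<and> (vk k \<longlongrightarrow> 0) at_infinity"
proof -
  \<comment> \<open>Only continuity of \<open>k\<close> (from \<open>d1\<close>, for measurability) and the bound for \<open>m = 2\<close> on \<open>k\<close>
    itself are used.\<close>
  obtain B where B: "\<And>t. t \<noteq> 0 \<Longrightarrow> \<bar>(1 + t\<^sup>2) ^ 2 * k t\<bar> \<le> B"
    using bdd[of 2] by auto
  have "continuous_on (- {0}) k"
    using d1 by (intro continuous_at_imp_continuous_on) (auto intro: DERIV_isCont)
  then have "k \<in> borel_measurable borel"
    by (rule borel_measurable_continuous_countable_exceptions[rotated]) simp
  then interpret admissible_kernel k B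
    using pos incr decr B by unfold_locales (auto dest: abs_le_D1)
  show ?thesis
    using ex1_Fk_eq_1 Hk_real_set Im_Hk_pos_set real_analytic_vk tendsto_vk_at_infinity by blast
qed

end
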